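(* For an orthomodular lattice $\mathbb{L}$ the following are equivalent: (i) $\mathbb{L}$ is distributive; (ii) $\mathcal{Q}_a(\mathbb{L})\cup\mathcal{Q}_b(\mathbb{L})=\mathcal{Q}_{a\vee b}(\mathbb{L})$ for all $a,b\in\mathbb{L}$; (iii) $\mathcal{Q}_a(\mathbb{L})\cup\mathcal{Q}_{a^\perp}(\mathbb{L})=\mathcal{Q}(\mathbb{L})$ for all $a\in\mathbb{L}$; (iv) every subset of the Stone spectrum $\mathcal{Q}(\mathbb{L})$ which is both open and closed is of the form $\mathcal{Q}_a(\mathbb{L})$ for some $a\in\mathbb{L}$.
   Context: An orthomodular lattice is a lattice with least element $0$, greatest element $1$ and a map $a\mapsto a^\perp$ with $a\wedge a^\perp=0$, $a\vee a^\perp=1$, $(a\wedge b)^\perp=a^\perp\vee b^\perp$, $(a\vee b)^\perp=a^\perp\wedge b^\perp$, $a^{\perp\perp}=a$, such that $b\le a$ implies $b=a\wedge(a^\perp\vee b)$. A quasipoint in a lattice $\mathbb{L}$ with least element $0$ is a maximal (w.r.t. inclusion) subset $\mathfrak{B}\subseteq\mathbb{L}$ such that $\mathfrak{B}\neq\emptyset$, $0\notin\mathfrak{B}$, and for all $a,b\in\mathfrak{B}$ there is $c\in\mathfrak{B}$ with $c\le a\wedge b$. $\mathcal{Q}(\mathbb{L})$ denotes the set of quasipoints; for $a\in\mathbb{L}$ put $\mathcal{Q}_a(\mathbb{L})=\{\mathfrak{B}\in\mathcal{Q}(\mathbb{L}) : a\in\mathfrak{B}\}$. The Stone spectrum of $\mathbb{L}$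 is $\mathcal{Q}(\mathbb{L})$ with the topology having the sets $\mathcal{Q}_a(\mathbb{L})$ ($a\in\mathbb{L}$) as a basis. *)

theory Defs
  imports "HOL-Analysis.Analysis"
begin

definition orthomodular :: "('a::bounded_lattice \<Rightarrow> 'a) \<Rightarrow> bool" where
  "orthomodular oc \<longleftrightarrow>
     (\<forall>a. inf a (oc a) = bot) \<and>
     (\<forall>a. sup a (oc a) = top) \<and>
     (\<forall>a b. oc (inf a b) = sup (oc a) (oc b)) \<and>
     (\<forall>a b. oc (sup a b) = inf (oc a) (oc b)) \<and>
     (\<forall>a. oc (oc a) = a) \<and>
     (\<forall>a b. b \<le> a \<longrightarrow> b = inf a (sup (oc a) b))"

definition distributive_lattice :: "'a::lattice itself \<Rightarrow> bool" where
  "distributive_lattice _ \<longleftrightarrow>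
     (\<forall>x y z :: 'a. inf x (sup y z) = sup (inf x y) (inf x z))"

definition filter_base :: "'a::bounded_lattice set \<Rightarrow> bool" where
  "filter_base B \<longleftrightarrow> B \<noteq> {} \<and> bot \<notin> B \<and>
     (\<forall>a\<in>B. \<forall>b\<in>B. \<exists>c\<in>B. c \<le> inf a b)"

definition quasipoint :: "'a::bounded_lattice set \<Rightarrow> bool" where
  "quasipoint B \<longleftrightarrow> filter_base B \<and> (\<forall>C. filter_base C \<and> B \<subseteq> C \<longrightarrow> C = B)"

definition Qpts :: "'a::bounded_lattice set set" where
  "Qpts = {B. quasipoint B}"

definition Qa :: "'a::bounded_lattice \<Rightarrow> 'a set set" where
  "Qa a = {B \<in> Qpts. a \<in> B}"

definition stone_spectrum :: "'a::bounded_lattice set topology" where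
  "stone_spectrum = topology_generated_by (range Qa)"

end

theory Submission
  imports Defs
begin

text \<open>Quasipoints are exactly the maximal proper filters, and a quasipoint contains
  precisely the elements that meet all of its members. Hence each \<open>Qa a\<close> is clopen and
  \<open>a \<mapsto> Qa a\<close> turns meets into intersections; in an orthomodular lattice it is moreover
  injective, since \<open>x \<le> y\<close> fails exactly when \<open>x \<sqinter> (x \<sqinter> y)\<^sup>\<perp> \<noteq> 0\<close>, and a quasipoint
  through that element separates \<open>x\<close> from \<open>y\<close>. Distributivity is therefore equivalent
  to \<open>Qa\<close> turning joins into unions, i.e. to all quasipoints being prime, which with
  complements reads \<open>Qa a \<union> Qa a\<^sup>\<perp> = Qpts\<close>. For a clopen \<open>U\<close>, the joins \<open>a \<squnion> b\<close> with
  \<open>Qa a \<subseteq> U\<close> and \<open>Qa b\<close> disjoint from \<open>U\<close> cover the spectrum; if \<open>1\<close> were not among them,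
  their complements would form a filter base whose quasipoints lie in no \<open>Qa (a \<squnion> b)\<close>.
  So \<open>1 = a \<squnion> b\<close> and \<open>U = Qa a\<close>. Conversely, \<open>Qa a \<union> Qa a\<^sup>\<perp>\<close> is always clopen, and
  if it is some \<open>Qa e\<close> then \<open>a, a\<^sup>\<perp> \<le> e\<close> forces \<open>e = 1\<close>.\<close>

lemma quasipoint_filter_base: "quasipoint B \<Longrightarrow> filter_base B"
  by (simp add: quasipoint_def)

lemma quasipoint_bot_notin: "quasipoint B \<Longrightarrow> bot \<notin> B"
  by (simp add: quasipoint_def filter_base_def)

lemma filter_base_directed:
  "filter_base B \<Longrightarrow> a \<in> B \<Longrightarrow> b \<in> B \<Longrightarrow> \<exists>c\<in>B. c \<le> inf a b"
  unfolding filter_base_def by blast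

lemma quasipoint_memI:
  assumes B: "quasipoint B" and meets: "\<forall>c\<in>B. inf a c \<noteq> bot"
  shows "a \<in> B"
proof -
  have fb: "filter_base B"
    using B by (rule quasipoint_filter_base)
  define C where "C = {x. \<exists>c\<in>B. inf a c \<le> x}"
  have "filter_base C"
    unfolding filter_base_def
  proof (intro conjI ballI)
    show "C \<noteq> {}"
      using fb by (auto simp: C_def filter_base_def)
    show "bot \<notin> C"
      using meets by (auto simp: C_def bot_unique)
  next
    fix x y assume "x \<in> C" "y \<in> C"
    then obtain c d where "c \<in> B" "d \<in> B" "inf a c \<le> x" "inf a d \<le> y"
      by (auto simp: C_def)
    moreover obtain e where "e \<in> B" "e \<le> inf c d"
      using filter_base_directed[OF fb \<open>c \<in> B\<close> \<open>d \<in> B\<close>] by blast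
    ultimately have "inf a e \<in> C" "inf a e \<le> inf x y"
      unfolding C_def by (blast, meson inf_mono le_inf_iff order_refl order_trans)
    then show "\<exists>z\<in>C. z \<le> inf x y" ..
  qed
  moreover have "B \<subseteq> C"
    unfolding C_def by (blast intro: inf_le2)
  ultimately have "C = B"
    using B by (simp add: quasipoint_def)
  moreover obtain c where "c \<in> B"
    using fb by (auto simp: filter_base_def)
  ultimately show ?thesis
    unfolding C_def by (blast intro: inf_le1)
qed

lemma quasipoint_inf_neq_bot:
  assumes "quasipoint B" "a \<in> B" "c \<in> B"
  shows "inf a c \<noteq> bot"
proof -
  obtain e where "e \<in> B" "e \<le> inf a c"
    using filter_base_directed[OF quasipoint_filter_base[OF assms(1)] assms(2,3)] by blast
  then show ?thesis
    using quasipoint_bot_notin[OF assms(1)] by (metis bot_unique)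
qed

lemma quasipoint_upward_closed:
  assumes B: "quasipoint B" and "b \<in> B" "b \<le> d"
  shows "d \<in> B"
proof (rule quasipoint_memI[OF B], intro ballI)
  fix c assume "c \<in> B"
  with B \<open>b \<in> B\<close> have "inf b c \<noteq> bot"
    by (rule quasipoint_inf_neq_bot)
  moreover have "inf b c \<le> inf d c"
    using \<open>b \<le> d\<close> by (rule inf_mono) simp
  ultimately show "inf d c \<noteq> bot"
    by (metis bot_unique)
qed

lemma quasipoint_inf_iff:
  assumes B: "quasipoint B"
  shows "inf a b \<in> B \<longleftrightarrow> a \<in> B \<and> b \<in> B"
proof
  assume "inf a b \<in> B"
  then show "a \<in> B \<and> b \<in> B"
    using quasipoint_upward_closed[OF B] by (meson inf_le1 inf_le2)
next
  assume "a \<in> B \<and> b \<in> B"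
  then obtain c where "c \<in> B" "c \<le> inf a b"
    using filter_base_directed[OF quasipoint_filter_base[OF B]] by blast
  then show "inf a b \<in> B"
    by (rule quasipoint_upward_closed[OF B])
qed

lemma quasipoint_top:
  assumes "quasipoint B"
  shows "top \<in> B"
proof -
  obtain b where "b \<in> B"
    using assms by (auto simp: quasipoint_def filter_base_def)
  then show ?thesis
    using assms quasipoint_upward_closed top_greatest by metis
qed

lemma filter_base_Union_chain:
  assumes "\<C> \<noteq> {}" "\<forall>C\<in>\<C>. filter_base C" "\<forall>C\<in>\<C>. \<forall>D\<in>\<C>. C \<subseteq> D \<or> D \<subseteq> C"
  shows "filter_base (\<Union>\<C>)"
  unfolding filter_base_def
proof (intro conjI ballI)
  show "\<Union>\<C> \<noteq> {}" "bot \<notin> \<Union>\<C>"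
    using assms(1,2) by (force simp: filter_base_def)+
next
  fix x y assume "x \<in> \<Union>\<C>" "y \<in> \<Union>\<C>"
  then obtain C where "C \<in> \<C>" "x \<in> C" "y \<in> C"
    using assms(3) by blast
  then show "\<exists>c\<in>\<Union>\<C>. c \<le> inf x y"
    using assms(2) by (force simp: filter_base_def)
qed

lemma filter_base_imp_quasipoint:
  assumes "filter_base C"
  shows "\<exists>B. quasipoint B \<and> C \<subseteq> B"
proof -
  let ?\<A> = "{D. filter_base D \<and> C \<subseteq> D}"
  have "\<exists>M\<in>?\<A>. \<forall>X\<in>?\<A>. M \<subseteq> X \<longrightarrow> X = M"
  proof (rule subset_Zorn_nonempty)
    show "?\<A> \<noteq> {}"
      using assms by blast
  next
    fix \<C> assume "\<C> \<noteq> {}" "subset.chain ?\<A> \<C>"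
    then show "\<Union>\<C> \<in> ?\<A>"
      using filter_base_Union_chain[of \<C>] by (auto simp: subset_chain_def)
  qed
  then obtain M where M: "M \<in> ?\<A>" "\<forall>X\<in>?\<A>. M \<subseteq> X \<longrightarrow> X = M"
    by blast
  then have "quasipoint M"
    unfolding quasipoint_def by blast
  with M show ?thesis
    by blast
qed

lemma quasipoint_exists:
  assumes "x \<noteq> bot"
  shows "\<exists>B. quasipoint B \<and> x \<in> B"
proof -
  have "filter_base {x}"
    using assms by (simp add: filter_base_def)
  then show ?thesis
    using filter_base_imp_quasipoint by blast
qed

lemma quasipoint_prime_if_distributive:
  fixes a b :: "'a::bounded_lattice"
  assumes D: "distributive_lattice TYPE('a)"
    and B: "quasipoint B" and "sup a b \<in> B"
  shows "a \<in> B \<or> b \<in> B"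
proof (rule ccontr)
  assume "\<not> (a \<in> B \<or> b \<in> B)"
  then obtain c d where "c \<in> B" "inf a c = bot" "d \<in> B" "inf b d = bot"
    using quasipoint_memI[OF B] by blast
  moreover have "inf (inf c d) (sup a b) = sup (inf (inf c d) a) (inf (inf c d) b)"
    using D unfolding distributive_lattice_def by blast
  moreover have "inf (inf c d) a \<le> inf a c" "inf (inf c d) b \<le> inf b d"
    by (simp_all add: le_infI1 le_infI2)
  ultimately have "inf (inf c d) (sup a b) = bot"
    by (simp add: bot_unique)
  moreover have "inf (inf c d) (sup a b) \<in> B"
    using \<open>sup a b \<in> B\<close> \<open>c \<in> B\<close> \<open>d \<in> B\<close> by (simp add: quasipoint_inf_iff[OF B])
  ultimately show False
    using quasipoint_bot_notin[OF B] by simp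
qed

lemma mem_Qa_iff: "B \<in> Qa a \<longleftrightarrow> quasipoint B \<and> a \<in> B"
  by (simp add: Qa_def Qpts_def)

lemma mem_Qpts_iff: "B \<in> Qpts \<longleftrightarrow> quasipoint B"
  by (simp add: Qpts_def)

lemma Qa_subset_Qpts: "Qa a \<subseteq> Qpts"
  by (auto simp: Qa_def)

lemma Qa_top: "Qa top = Qpts"
  by (auto simp: mem_Qa_iff mem_Qpts_iff quasipoint_top)

lemma Qa_bot: "Qa bot = {}"
  by (auto simp: mem_Qa_iff quasipoint_bot_notin)

lemma Qa_inf: "Qa (inf a b) = Qa a \<inter> Qa b"
  by (auto simp: mem_Qa_iff quasipoint_inf_iff)

lemma Qa_mono: "a \<le> b \<Longrightarrow> Qa a \<subseteq> Qa b"
  by (auto simp: mem_Qa_iff intro: quasipoint_upward_closed)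

lemma sup_Qa_subset: "Qa a \<union> Qa b \<subseteq> Qa (sup a b)"
  by (simp add: Qa_mono)

lemma Qa_sup_if_distributive:
  "distributive_lattice TYPE('a::bounded_lattice) \<Longrightarrow> Qa a \<union> Qa b = Qa (sup a (b::'a))"
  using quasipoint_prime_if_distributive sup_Qa_subset by (fastforce simp: mem_Qa_iff)

lemma topspace_stone_spectrum: "topspace stone_spectrum = Qpts"
  unfolding stone_spectrum_def using Qa_top Qa_subset_Qpts by auto

lemma openin_stone_spectrum_iff:
  "openin stone_spectrum U \<longleftrightarrow> (\<forall>x\<in>U. \<exists>a. x \<in> Qa a \<and> Qa a \<subseteq> U)"
proof
  assume "openin stone_spectrum U"
  then have "generate_topology_on (range Qa) U"
    unfolding stone_spectrum_def by (rule openin_topology_generated_by)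
  then show "\<forall>x\<in>U. \<exists>a. x \<in> Qa a \<and> Qa a \<subseteq> U"
  proof induction
    case (Int U V)
    show ?case
    proof
      fix x assume "x \<in> U \<inter> V"
      then obtain a b where "x \<in> Qa a" "Qa a \<subseteq> U" "x \<in> Qa b" "Qa b \<subseteq> V"
        using Int.IH by blast
      then show "\<exists>c. x \<in> Qa c \<and> Qa c \<subseteq> U \<inter> V"
        by (intro exI[of _ "inf a b"]) (auto simp: Qa_inf)
    qed
  qed blast+
next
  assume "\<forall>x\<in>U. \<exists>a. x \<in> Qa a \<and> Qa a \<subseteq> U"
  then have "U = \<Union>{Qa a | a. Qa a \<subseteq> U}"
    by blast
  moreover have "generate_topology_on (range Qa) (\<Union>{Qa a | a. Qa a \<subseteq> U})"
    by (rule generate_topology_on.UN) (auto intro: generate_topology_on.Basis)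
  ultimately show "openin stone_spectrum U"
    unfolding stone_spectrum_def by (simp add: openin_topology_generated_by_iff)
qed

lemma openin_Qa: "openin stone_spectrum (Qa a)"
  by (auto simp: openin_stone_spectrum_iff)

lemma closedin_Qa: "closedin stone_spectrum (Qa a)"
proof -
  have "openin stone_spectrum (Qpts - Qa a)"
    unfolding openin_stone_spectrum_iff
  proof
    fix B assume "B \<in> Qpts - Qa a"
    then have "quasipoint B" "a \<notin> B"
      by (auto simp: mem_Qa_iff mem_Qpts_iff)
    then obtain c where "c \<in> B" "inf a c = bot"
      using quasipoint_memI by blast
    moreover have "Qa c \<subseteq> Qpts - Qa a"
    proof
      fix B' assume "B' \<in> Qa c"
      then have "quasipoint B'" "c \<in> B'"
        by (simp_all add: mem_Qa_iff)
      then have "a \<notin> B'"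
        using \<open>inf a c = bot\<close> quasipoint_bot_notin quasipoint_inf_iff by metis
      then show "B' \<in> Qpts - Qa a"
        using \<open>quasipoint B'\<close> by (simp add: mem_Qa_iff mem_Qpts_iff)
    qed
    ultimately show "\<exists>c. B \<in> Qa c \<and> Qa c \<subseteq> Qpts - Qa a"
      using \<open>quasipoint B\<close> by (auto simp: mem_Qa_iff)
  qed
  then show ?thesis
    by (simp add: closedin_def topspace_stone_spectrum Qa_subset_Qpts)
qed

locale ortholattice =
  fixes oc :: "'a::bounded_lattice \<Rightarrow> 'a"
  assumes inf_oc: "inf a (oc a) = bot"
    and sup_oc: "sup a (oc a) = top"
    and oc_sup: "oc (sup a b) = inf (oc a) (oc b)"
    and oc_inf: "oc (inf a b) = sup (oc a) (oc b)"
    and oc_oc: "oc (oc a) = a"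

locale orthomodular_lattice = ortholattice +
  assumes orthomodular_law: "b \<le> a \<Longrightarrow> b = inf a (sup (oc a) b)"

lemma orthomodular_imp_orthomodular_lattice:
  "orthomodular oc \<Longrightarrow> orthomodular_lattice oc"
  by (simp add: orthomodular_def orthomodular_lattice_def ortholattice_def
      orthomodular_lattice_axioms_def)

context ortholattice
begin

lemma oc_bot: "oc bot = top"
  using sup_oc[of bot] by simp

lemma oc_top: "oc top = bot"
  using inf_oc[of top] by simp

lemma oc_eq_bot_iff: "oc a = bot \<longleftrightarrow> a = top"
  using oc_oc[of a] oc_bot oc_top by auto

lemma quasipoint_not_mem_oc: "quasipoint B \<Longrightarrow> a \<in> B \<Longrightarrow> oc a \<notin> B"
  using quasipoint_inf_iff[of B a "oc a"] quasipoint_bot_notin[of B] by (simp add: inf_oc)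

text \<open>A compactness property of the spectrum: the complements of a join-closed family
  generate a filter base unless the family contains \<open>1\<close>.\<close>

lemma top_mem_if_Qa_cover:
  fixes S :: "'a set"
  assumes "S \<noteq> {}" "\<forall>s\<in>S. \<forall>t\<in>S. sup s t \<in> S" "Qpts \<subseteq> (\<Union>s\<in>S. Qa s)"
  shows "top \<in> S"
proof (rule ccontr)
  assume "top \<notin> S"
  have "filter_base (oc ` S)"
    unfolding filter_base_def
  proof (intro conjI ballI)
    show "oc ` S \<noteq> {}"
      using assms(1) by blast
    show "bot \<notin> oc ` S"
      using \<open>top \<notin> S\<close> by (metis imageE oc_eq_bot_iff)
  next
    fix x y assume "x \<in> oc ` S" "y \<in> oc ` S"
    then have "inf x y \<in> oc ` S"
      using assms(2) by (auto simp: oc_sup[symmetric])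
    then show "\<exists>c\<in>oc ` S. c \<le> inf x y"
      by blast
  qed
  then obtain B where B: "quasipoint B" "oc ` S \<subseteq> B"
    using filter_base_imp_quasipoint by blast
  then obtain s where "s \<in> S" "s \<in> B"
    using assms(3) by (auto simp: mem_Qpts_iff mem_Qa_iff)
  then show False
    using B quasipoint_not_mem_oc by blast
qed

lemma Qa_sup_if_Qa_oc_cover:
  fixes a b :: 'a
  assumes cover: "\<forall>a. Qa a \<union> Qa (oc a) = Qpts"
  shows "Qa a \<union> Qa b = Qa (sup a b)"
proof (rule subset_antisym[OF sup_Qa_subset], rule subsetI)
  fix B assume "B \<in> Qa (sup a b)"
  then have B: "quasipoint B" "sup a b \<in> B"
    by (auto simp: mem_Qa_iff)
  show "B \<in> Qa a \<union> Qa b"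
  proof (rule ccontr)
    assume "B \<notin> Qa a \<union> Qa b"
    moreover have "B \<in> Qa a \<union> Qa (oc a)" "B \<in> Qa b \<union> Qa (oc b)"
      using cover B(1) by (simp_all add: mem_Qpts_iff)
    ultimately have "oc a \<in> B" "oc b \<in> B"
      by (auto simp: mem_Qa_iff)
    then have "oc (sup a b) \<in> B"
      by (simp add: oc_sup quasipoint_inf_iff[OF B(1)])
    then show False
      using B quasipoint_not_mem_oc by blast
  qed
qed

lemma Qa_oc_cover_if_Qa_sup:
  assumes "\<forall>a b :: 'a. Qa a \<union> Qa b = Qa (sup a b)"
  shows "Qa a \<union> Qa (oc a) = Qpts"
  using assms by (simp add: sup_oc Qa_top)

lemma Qa_sup_iff_Qa_oc_cover:
  "(\<forall>a b :: 'a. Qa a \<union> Qa b = Qa (sup a b)) \<longleftrightarrow> (\<forall>a. Qa a \<union> Qa (oc a) = Qpts)"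
proof
  assume "\<forall>a b :: 'a. Qa a \<union> Qa b = Qa (sup a b)"
  then show "\<forall>a. Qa a \<union> Qa (oc a) = Qpts"
    using Qa_oc_cover_if_Qa_sup by blast
next
  assume "\<forall>a. Qa a \<union> Qa (oc a) = Qpts"
  then show "\<forall>a b :: 'a. Qa a \<union> Qa b = Qa (sup a b)"
    using Qa_sup_if_Qa_oc_cover by blast
qed

lemma clopen_eq_Qa_if_Qa_sup:
  assumes Qa_sup: "\<forall>a b :: 'a. Qa a \<union> Qa b = Qa (sup a b)"
    and U: "openin stone_spectrum U" "closedin stone_spectrum U"
  shows "\<exists>a :: 'a. U = Qa a"
proof -
  define V where "V = Qpts - U"
  have V: "openin stone_spectrum V" and "U \<subseteq> Qpts"
    using U(2) by (auto simp: V_def closedin_def topspace_stone_spectrum)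
  define S where "S = {sup a b | a b. Qa a \<subseteq> U \<and> Qa b \<subseteq> V}"
  have "Qa bot \<subseteq> U" "Qa bot \<subseteq> V"
    by (simp_all add: Qa_bot)
  have "top \<in> S"
  proof (rule top_mem_if_Qa_cover)
    have "sup bot bot \<in> S"
      unfolding S_def using \<open>Qa bot \<subseteq> U\<close> \<open>Qa bot \<subseteq> V\<close> by blast
    then show "S \<noteq> {}"
      by blast
  next
    show "\<forall>s\<in>S. \<forall>t\<in>S. sup s t \<in> S"
    proof (intro ballI)
      fix s t assume "s \<in> S" "t \<in> S"
      then obtain a b a' b' where ab: "s = sup a b" "t = sup a' b'"
        "Qa a \<subseteq> U" "Qa b \<subseteq> V" "Qa a' \<subseteq> U" "Qa b' \<subseteq> V"
        by (auto simp: S_def)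
      then have "sup s t = sup (sup a a') (sup b b')"
        by (simp add: ac_simps)
      moreover have "Qa (sup a a') = Qa a \<union> Qa a'" "Qa (sup b b') = Qa b \<union> Qa b'"
        using Qa_sup by simp_all
      then have "Qa (sup a a') \<subseteq> U" "Qa (sup b b') \<subseteq> V"
        using ab by auto
      ultimately show "sup s t \<in> S"
        unfolding S_def by blast
    qed
  next
    show "Qpts \<subseteq> (\<Union>s\<in>S. Qa s)"
    proof
      fix B :: "'a set" assume "B \<in> Qpts"
      then consider "B \<in> U" | "B \<in> V"
        by (auto simp: V_def)
      then show "B \<in> (\<Union>s\<in>S. Qa s)"
      proof cases
        case 1
        then obtain a where "B \<in> Qa a" "Qa a \<subseteq> U"
          using U(1) by (auto simp: openin_stone_spectrum_iff)
        moreover have "sup a bot \<in> S"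
          unfolding S_def using \<open>Qa a \<subseteq> U\<close> \<open>Qa bot \<subseteq> V\<close> by blast
        ultimately show ?thesis
          by (metis UN_iff sup_bot_right)
      next
        case 2
        then obtain b where "B \<in> Qa b" "Qa b \<subseteq> V"
          using V by (auto simp: openin_stone_spectrum_iff)
        moreover have "sup bot b \<in> S"
          unfolding S_def using \<open>Qa bot \<subseteq> U\<close> \<open>Qa b \<subseteq> V\<close> by blast
        ultimately show ?thesis
          by (metis UN_iff sup_bot_left)
      qed
    qed
  qed
  then obtain a b where "top = sup a b" "Qa a \<subseteq> U" "Qa b \<subseteq> V"
    unfolding S_def by blast
  then have "Qa a \<union> Qa b = Qa top"
    using Qa_sup by simp
  then have "Qpts = Qa a \<union> Qa b"
    by (simp add: Qa_top)
  then have "U = Qa a"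
    using \<open>U \<subseteq> Qpts\<close> \<open>Qa a \<subseteq> U\<close> \<open>Qa b \<subseteq> V\<close> by (auto simp: V_def)
  then show ?thesis ..
qed

end

context orthomodular_lattice
begin

lemma eq_if_le_and_inf_oc_eq_bot:
  assumes "b \<le> a" "inf (oc b) a = bot"
  shows "a = b"
proof -
  have "sup (oc a) b = top"
    using oc_inf[of "oc b" a] assms(2) by (simp add: oc_oc oc_bot sup_commute)
  then show ?thesis
    using orthomodular_law[OF assms(1)] by (metis inf_top_right)
qed

lemma Qa_subset_Qa_iff: "Qa x \<subseteq> Qa y \<longleftrightarrow> x \<le> (y :: 'a)"
proof
  assume sub: "Qa x \<subseteq> Qa y"
  show "x \<le> y"
  proof (rule ccontr)
    assume "\<not> x \<le> y"
    then have "inf (oc (inf x y)) x \<noteq> bot"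
      using eq_if_le_and_inf_oc_eq_bot[OF inf_le1, of x y] le_iff_inf by metis
    then obtain B where B: "quasipoint B" "inf (oc (inf x y)) x \<in> B"
      using quasipoint_exists by blast
    then have "x \<in> B" "oc (inf x y) \<in> B"
      by (simp_all add: quasipoint_inf_iff)
    moreover have "y \<in> B"
      using sub B(1) \<open>x \<in> B\<close> by (auto simp: mem_Qa_iff)
    ultimately have "inf x y \<in> B" "oc (inf x y) \<in> B"
      using B(1) by (simp_all add: quasipoint_inf_iff)
    then show False
      using B(1) quasipoint_not_mem_oc by blast
  qed
qed (rule Qa_mono)

lemma Qa_inject: "Qa x = Qa y \<longleftrightarrow> x = (y :: 'a)"
  by (metis Qa_subset_Qa_iff order_antisym order_refl)

lemma distributive_iff_Qa_sup:
  "distributive_lattice TYPE('a) \<longleftrightarrow> (\<forall>a b :: 'a. Qa a \<union> Qa b = Qa (sup a b))"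
proof
  assume Qa_sup: "\<forall>a b :: 'a. Qa a \<union> Qa b = Qa (sup a b)"
  have "Qa (inf x (sup y z)) = Qa (sup (inf x y) (inf x z))" for x y z :: 'a
    using Qa_sup[rule_format, symmetric] by (auto simp: Qa_inf)
  then show "distributive_lattice TYPE('a)"
    unfolding distributive_lattice_def by (simp add: Qa_inject)
qed (use Qa_sup_if_distributive in blast)

lemma Qa_oc_cover_if_clopen_eq_Qa:
  assumes "\<forall>U. openin stone_spectrum U \<and> closedin stone_spectrum U \<longrightarrow> (\<exists>a :: 'a. U = Qa a)"
  shows "Qa a \<union> Qa (oc a) = Qpts"
proof -
  have "openin stone_spectrum (Qa a \<union> Qa (oc a))" "closedin stone_spectrum (Qa a \<union> Qa (oc a))"
    by (simp_all add: openin_Qa closedin_Qa openin_Un closedin_Un)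
  then obtain e where e: "Qa a \<union> Qa (oc a) = Qa e"
    using assms by blast
  then have "Qa a \<subseteq> Qa e" "Qa (oc a) \<subseteq> Qa e"
    by blast+
  then have "sup a (oc a) \<le> e"
    by (simp add: Qa_subset_Qa_iff)
  then have "e = top"
    by (simp add: sup_oc top_unique)
  then show ?thesis
    using e Qa_top by simp
qed

lemma Qa_sup_iff_clopen_eq_Qa:
  "(\<forall>a b :: 'a. Qa a \<union> Qa b = Qa (sup a b)) \<longleftrightarrow>
    (\<forall>U. openin stone_spectrum U \<and> closedin stone_spectrum U \<longrightarrow> (\<exists>a :: 'a. U = Qa a))"
proof
  assume "\<forall>a b :: 'a. Qa a \<union> Qa b = Qa (sup a b)"
  then show "\<forall>U. openin stone_spectrum U \<and> closedin stone_spectrum U \<longrightarrow> (\<exists>a :: 'a. U = Qa a)"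
    using clopen_eq_Qa_if_Qa_sup by blast
next
  assume "\<forall>U. openin stone_spectrum U \<and> closedin stone_spectrum U \<longrightarrow> (\<exists>a :: 'a. U = Qa a)"
  then have "\<forall>a. Qa a \<union> Qa (oc a) = Qpts"
    using Qa_oc_cover_if_clopen_eq_Qa by blast
  with Qa_sup_iff_Qa_oc_cover show "\<forall>a b :: 'a. Qa a \<union> Qa b = Qa (sup a b)"
    by (rule iffD2)
qed

end

theorem proposition3p16:
  fixes oc :: "'a::bounded_lattice \<Rightarrow> 'a"
  assumes "orthomodular oc"
  shows "(distributive_lattice TYPE('a) \<longleftrightarrow> (\<forall>a b :: 'a. Qa a \<union> Qa b = Qa (sup a b)))
       \<and> (distributive_lattice TYPE('a) \<longleftrightarrow> (\<forall>a :: 'a. Qa a \<union> Qa (oc a) = Qpts))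
       \<and> (distributive_lattice TYPE('a) \<longleftrightarrow>
            (\<forall>U. openin stone_spectrum U \<and> closedin stone_spectrum U \<longrightarrow> (\<exists>a :: 'a. U = Qa a)))"
proof -
  interpret orthomodular_lattice oc
    using assms by (rule orthomodular_imp_orthomodular_lattice)
  show ?thesis
    by (intro conjI distributive_iff_Qa_sup
        trans[OF distributive_iff_Qa_sup Qa_sup_iff_Qa_oc_cover]
        trans[OF distributive_iff_Qa_sup Qa_sup_iff_clopen_eq_Qa])
qed

end
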